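(* Let $n$ be even and $F\colon\mathbb F_2^n\to\mathbb F_2^n$ a quadratic APN function with linearity $2^{\frac{n+k}{2}}$ with $k\le n/2$. Write $n=sk+r$ with integers $s,r$, $0\le r<k$. If $k\mid n$ then $|N_F|\ge\frac{2^n-1}{2^k-1}$, and if $k\nmid n$ then $|N_F|\ge 1+2^{\lceil\frac{k+r}{2}\rceil}+2^{k+r}\sum_{i=0}^{s-2}2^{ik}$.
   Context: $\langle\cdot,\cdot\rangle$ is the standard dot product. $F$ is APN if for every $a\ne0$ and $c$, $F(x)+F(x+a)=c$ has at most 2 solutions; quadratic if each component $F_b(x)=\langle b,F(x)\rangle$ is a quadratic form plus an affine function. $W_F(b,a)=\sum_x(-1)^{F_b(x)+\langle x,a\rangle}$; linearity $L(F)=\max_{a,\,b\neq0}|W_F(b,a)|$. $F_b$ is bent if $|W_F(b,a)|=2^{n/2}$ for all $a$. $N_F=\{b\in\mathbb F_2^n\setminus\{0\}\colon F_b\text{ not bent}\}$. *)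

theory Defs
  imports Complex_Main
begin

text \<open>Vectors of F_2^n are represented as boolean lists of length n
  (True = 1, False = 0); addition is componentwise XOR.\<close>

definition vecs :: "nat \<Rightarrow> bool list set" where
  "vecs n = {x. length x = n}"

definition vzero :: "nat \<Rightarrow> bool list" where
  "vzero n = replicate n False"

definition vadd :: "bool list \<Rightarrow> bool list \<Rightarrow> bool list" where
  "vadd x y = map2 (\<lambda>u v. u \<noteq> v) x y"

definition dotp :: "bool list \<Rightarrow> bool list \<Rightarrow> bool" where
  "dotp x y = odd (card {i. i < length x \<and> i < length y \<and> x ! i \<and> y ! i})"

definition component :: "(bool list \<Rightarrow> bool list) \<Rightarrow> bool list \<Rightarrow> bool list \<Rightarrow> bool" where
  "component F b x = dotp b (F x)"

definition maps_into :: "nat \<Rightarrow> (bool list \<Rightarrow> bool list) \<Rightarrow> bool" where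
  "maps_into n F \<longleftrightarrow> (\<forall>x\<in>vecs n. F x \<in> vecs n)"

definition is_APN :: "nat \<Rightarrow> (bool list \<Rightarrow> bool list) \<Rightarrow> bool" where
  "is_APN n F \<longleftrightarrow> (\<forall>a\<in>vecs n. a \<noteq> vzero n \<longrightarrow> (\<forall>c\<in>vecs n.
      card {x\<in>vecs n. vadd (F x) (F (vadd x a)) = c} \<le> 2))"

definition quad_form :: "nat \<Rightarrow> (nat \<Rightarrow> nat \<Rightarrow> bool) \<Rightarrow> bool list \<Rightarrow> bool" where
  "quad_form n c x = odd (card {(i,j). i \<le> j \<and> j < n \<and> c i j \<and> x ! i \<and> x ! j})"

definition affine_fun :: "nat \<Rightarrow> (nat \<Rightarrow> bool) \<Rightarrow> bool \<Rightarrow> bool list \<Rightarrow> bool" where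
  "affine_fun n a e x = (odd (card {i. i < n \<and> a i \<and> x ! i}) \<noteq> e)"

definition is_quadratic :: "nat \<Rightarrow> (bool list \<Rightarrow> bool list) \<Rightarrow> bool" where
  "is_quadratic n F \<longleftrightarrow> (\<forall>b\<in>vecs n. \<exists>c a e. \<forall>x\<in>vecs n.
      component F b x = (quad_form n c x \<noteq> affine_fun n a e x))"

definition walsh :: "nat \<Rightarrow> (bool list \<Rightarrow> bool list) \<Rightarrow> bool list \<Rightarrow> bool list \<Rightarrow> int" where
  "walsh n F b a = (\<Sum>x\<in>vecs n. (-1) ^ (if component F b x \<noteq> dotp x a then 1 else 0))"

definition linearity :: "nat \<Rightarrow> (bool list \<Rightarrow> bool list) \<Rightarrow> int" where
  "linearity n F = Max {\<bar>walsh n F b a\<bar> | a b. a \<in> vecs n \<and> b \<in> vecs n \<and> b \<noteq> vzero n}"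

definition is_bent_comp :: "nat \<Rightarrow> (bool list \<Rightarrow> bool list) \<Rightarrow> bool list \<Rightarrow> bool" where
  "is_bent_comp n F b \<longleftrightarrow> (\<forall>a\<in>vecs n. \<bar>real_of_int (walsh n F b a)\<bar> = 2 powr (real n / 2))"

definition NF :: "nat \<Rightarrow> (bool list \<Rightarrow> bool list) \<Rightarrow> bool list set" where
  "NF n F = {b\<in>vecs n. b \<noteq> vzero n \<and> \<not> is_bent_comp n F b}"

end

(*
  For quadratic F every component F_b has a linear space V_b, the radical of its (bilinear)
  second derivative, and W_F(b,a)^2 is either 0 or 2^n |V_b|. Hence F_b is bent iff V_b = 0,
  and the linearity hypothesis gives |V_b| <= 2^k. For APN F every a <> 0 lies in V_b for
  exactly one b <> 0, so the spaces V_b with b in N_F form a partition of F_2^n into subspaces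
  of dimension at most k with exactly |N_F| blocks; counting points already gives
  |N_F| (2^k - 1) >= 2^n - 1.
  If n = sk + r with 0 < r < k, write |N_F| = 1 + S + D (base_count and excess below) with
  S = 2^(k+r) (1 + 2^k + ... + 2^((s-2)k)).
  Counting the blocks contained in a hyperplane shows that the total size of the blocks of size
  below 2^k contained in it is congruent to D modulo 2^k. Averaging this quantity over all
  hyperplanes, and over the hyperplanes containing one such block, forces D >= 2^ceil((k+r)/2).
*)

theory Submission
  imports Defs "HOL-Computational_Algebra.Primes"
begin

lemma in_vecs_iff [simp]: "x \<in> vecs n \<longleftrightarrow> length x = n"
  by (simp add: vecs_def)

lemma length_vadd [simp]: "length (vadd x y) = min (length x) (length y)"
  by (simp add: vadd_def)

lemma nth_vadd [simp]: "i < length x \<Longrightarrow> i < length y \<Longrightarrow> vadd x y ! i = (x ! i \<noteq> y ! i)"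
  by (simp add: vadd_def)

lemma length_vzero [simp]: "length (vzero n) = n"
  by (simp add: vzero_def)

lemma nth_vzero [simp]: "i < n \<Longrightarrow> vzero n ! i = False"
  by (simp add: vzero_def)

lemma vzero_in_vecs: "vzero n \<in> vecs n"
  by simp

lemma vadd_commute: "vadd x y = vadd y x"
  unfolding vadd_def by (rule nth_equalityI) auto

lemma vadd_self [simp]: "length x = n \<Longrightarrow> vadd x x = vzero n"
  by (rule nth_equalityI) auto

lemma vadd_vzero_right [simp]: "length x = n \<Longrightarrow> vadd x (vzero n) = x"
  by (rule nth_equalityI) auto

lemma vadd_vzero_left [simp]: "length x = n \<Longrightarrow> vadd (vzero n) x = x"
  by (rule nth_equalityI) auto

lemma vadd_vadd_cancel: "length x = length y \<Longrightarrow> vadd (vadd x y) y = x"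
  by (rule nth_equalityI) auto

lemma vadd_vadd_cancel_left: "length x = length y \<Longrightarrow> vadd y (vadd y x) = x"
  by (rule nth_equalityI) auto

lemma vadd_eq_vzero_iff: "length x = n \<Longrightarrow> length y = n \<Longrightarrow> vadd x y = vzero n \<longleftrightarrow> x = y"
  by (auto simp: list_eq_iff_nth_eq)

lemma finite_vecs [simp]: "finite (vecs n)"
  using finite_lists_length_eq[of "UNIV :: bool set" n] by (simp add: vecs_def)

lemma card_vecs [simp]: "card (vecs n) = 2 ^ n"
  using card_lists_length_eq[of "UNIV :: bool set" n] by (simp add: vecs_def)

lemma card_nonzero_vecs: "int (card (vecs n - {vzero n})) = 2 ^ n - 1"
  by simp

lemma finite_subset_vecs: "X \<subseteq> vecs n \<Longrightarrow> finite X"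
  using finite_subset finite_vecs by blast

lemma odd_card_filter_insert:
  "finite A \<Longrightarrow> a \<notin> A \<Longrightarrow>
    odd (card {x \<in> insert a A. P x}) = (P a \<noteq> odd (card {x \<in> A. P x}))"
proof -
  assume "finite A" "a \<notin> A"
  moreover have "{x \<in> insert a A. P x} = (if P a then insert a {x \<in> A. P x} else {x \<in> A. P x})"
    by auto
  ultimately show ?thesis
    by simp
qed

lemma odd_card_filter_xor:
  "finite A \<Longrightarrow>
    odd (card {x \<in> A. P x \<noteq> Q x}) = (odd (card {x \<in> A. P x}) \<noteq> odd (card {x \<in> A. Q x}))"
proof (induction A rule: finite_induct)
  case (insert a A)
  show ?case
    by (simp only: odd_card_filter_insert[OF insert.hyps] insert.IH) auto
qed simp

lemma dotp_eq_odd_card: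
  "length b = n \<Longrightarrow> length x = n \<Longrightarrow> dotp b x = odd (card {i \<in> {..<n}. b ! i \<and> x ! i})"
  unfolding dotp_def by simp

lemma dotp_commute: "dotp x y = dotp y x"
  unfolding dotp_def by (simp add: conj_commute conj_left_commute)

lemma dotp_vadd_right:
  assumes "length b = n" "length x = n" "length y = n"
  shows "dotp b (vadd x y) = (dotp b x \<noteq> dotp b y)"
proof -
  have "{i \<in> {..<n}. b ! i \<and> vadd x y ! i} = {i \<in> {..<n}. (b ! i \<and> x ! i) \<noteq> (b ! i \<and> y ! i)}"
    using assms by auto
  then show ?thesis
    using assms
    by (simp only: dotp_eq_odd_card length_vadd min.idem odd_card_filter_xor finite_lessThan)
qed

lemma dotp_vadd_left:
  "length b = n \<Longrightarrow> length x = n \<Longrightarrow> length y = n \<Longrightarrow> dotp (vadd x y) b = (dotp x b \<noteq> dotp y b)"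
  using dotp_vadd_right dotp_commute by metis

lemma dotp_vzero_left [simp]: "dotp (vzero n) x = False"
  and dotp_vzero_right [simp]: "dotp x (vzero n) = False"
proof -
  have l: "{i. i < length (vzero n) \<and> i < length x \<and> vzero n ! i \<and> x ! i} = {}"
    and r: "{i. i < length x \<and> i < length (vzero n) \<and> x ! i \<and> vzero n ! i} = {}"
    by auto
  show "dotp (vzero n) x = False" "dotp x (vzero n) = False"
    by (simp_all only: dotp_def l r card.empty) simp_all
qed

lemma dotp_all_False_imp_vzero:
  assumes "length x = n" and "\<And>b. length b = n \<Longrightarrow> \<not> dotp b x"
  shows "x = vzero n"
proof (rule nth_equalityI)
  fix i assume i: "i < length x"
  define e where "e = (vzero n)[i := True]"
  have "{j. j < length e \<and> j < length x \<and> e ! j \<and> x ! j} = (if x ! i then {i} else {})"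
    using assms(1) i by (auto simp: e_def nth_list_update)
  then have "dotp e x = x ! i"
    unfolding dotp_def by simp
  then show "x ! i = vzero n ! i"
    using assms i by (simp add: e_def)
qed (use assms in simp)

section \<open>Character sums over subspaces\<close>

lemma int_card_Diff_singleton:
  assumes "finite A" "a \<in> A"
  shows "int (card (A - {a})) = int (card A) - 1"
proof -
  have "0 < card A"
    using assms card_gt_0_iff by blast
  then show ?thesis
    using assms by (simp add: Suc_le_eq)
qed

lemma sum_if_mem_const:
  "finite A \<Longrightarrow> (\<Sum>x\<in>A. if x \<in> B then c else 0) = of_nat (card (A \<inter> B)) * c"
  by (simp add: sum.If_cases Int_def)

definition chi :: "bool \<Rightarrow> int" where
  "chi P = (if P then -1 else 1)"

lemma chi_simps [simp]: "chi False = 1" "chi True = -1"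
  by (simp_all add: chi_def)

lemma chi_xor: "chi (P \<noteq> Q) = chi P * chi Q"
  by (simp add: chi_def)

definition is_subspace :: "nat \<Rightarrow> bool list set \<Rightarrow> bool" where
  "is_subspace n X \<longleftrightarrow> X \<subseteq> vecs n \<and> vzero n \<in> X \<and> (\<forall>x\<in>X. \<forall>y\<in>X. vadd x y \<in> X)"

lemma is_subspace_vecs: "is_subspace n (vecs n)"
  by (simp add: is_subspace_def)

lemma sum_chi_additive:
  assumes X: "is_subspace n X"
    and g: "\<And>x y. x \<in> X \<Longrightarrow> y \<in> X \<Longrightarrow> g (vadd x y) = (g x \<noteq> g y)"
  shows "(\<Sum>x\<in>X. chi (g x)) = (if \<forall>x\<in>X. \<not> g x then int (card X) else 0)"
proof (cases "\<forall>x\<in>X. \<not> g x")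
  case False
  then obtain x0 where x0: "x0 \<in> X" "g x0"
    by blast
  have XV: "X \<subseteq> vecs n"
    using X by (simp add: is_subspace_def)
  \<comment> \<open>translation by \<open>x0\<close> permutes \<open>X\<close> and flips the sign of every term\<close>
  have "(\<Sum>x\<in>X. chi (g x)) = (\<Sum>x\<in>X. chi (g (vadd x x0)))"
    using X x0 XV
    by (intro sum.reindex_bij_witness[of _ "\<lambda>x. vadd x x0" "\<lambda>x. vadd x x0"])
      (auto simp: is_subspace_def vadd_vadd_cancel subset_iff)
  also have "\<dots> = (\<Sum>x\<in>X. - chi (g x))"
    using g x0 by (intro sum.cong) (simp_all add: chi_def)
  also have "\<dots> = - (\<Sum>x\<in>X. chi (g x))"
    by (simp add: sum_negf)
  finally show ?thesis
    using False by auto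
qed simp

lemma sum_chi_dotp:
  assumes "x \<in> vecs n"
  shows "(\<Sum>\<phi>\<in>vecs n. chi (dotp \<phi> x)) = (if x = vzero n then 2 ^ n else 0)"
proof -
  have "(\<Sum>\<phi>\<in>vecs n. chi (dotp \<phi> x)) =
      (if \<forall>\<phi>\<in>vecs n. \<not> dotp \<phi> x then int (card (vecs n)) else 0)"
    using assms by (intro sum_chi_additive[OF is_subspace_vecs]) (simp add: dotp_vadd_left)
  moreover have "(\<forall>\<phi>\<in>vecs n. \<not> dotp \<phi> x) \<longleftrightarrow> x = vzero n"
    by (metis assms dotp_all_False_imp_vzero dotp_vzero_right in_vecs_iff)
  ultimately show ?thesis
    by simp
qed

definition annihilator :: "nat \<Rightarrow> bool list set \<Rightarrow> bool list set" where
  "annihilator n X = {\<phi> \<in> vecs n. \<forall>x\<in>X. \<not> dotp \<phi> x}"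

lemma annihilator_subset: "annihilator n X \<subseteq> vecs n"
  by (auto simp: annihilator_def)

lemma vzero_in_annihilator [simp]: "vzero n \<in> annihilator n X"
  by (simp add: annihilator_def)

lemma annihilator_neq_vecs:
  assumes "is_subspace n X" and "X \<noteq> {vzero n}"
  shows "annihilator n X \<noteq> vecs n"
proof -
  obtain x where "x \<in> X" "x \<noteq> vzero n"
    using assms by (auto simp: is_subspace_def)
  moreover have "length x = n"
    using \<open>x \<in> X\<close> assms(1) by (auto simp: is_subspace_def)
  ultimately obtain b where "length b = n" "dotp b x"
    using dotp_all_False_imp_vzero by blast
  then show ?thesis
    using \<open>x \<in> X\<close> by (auto simp: annihilator_def)
qed

lemma sum_chi_dotp_subspace:
  assumes "is_subspace n X" and "\<phi> \<in> vecs n"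
  shows "(\<Sum>x\<in>X. chi (dotp \<phi> x)) = (if \<phi> \<in> annihilator n X then int (card X) else 0)"
  using assms sum_chi_additive[of n X "dotp \<phi>"]
  by (auto simp: annihilator_def is_subspace_def subset_iff dotp_vadd_right)

lemma sum_chi_dotp_product:
  assumes XV: "X \<subseteq> vecs n" and YV: "Y \<subseteq> vecs n"
  shows "(\<Sum>\<phi>\<in>vecs n. (\<Sum>x\<in>X. chi (dotp \<phi> x)) * (\<Sum>y\<in>Y. chi (dotp \<phi> y))) =
    2 ^ n * int (card (X \<inter> Y))"
proof -
  have "chi (dotp \<phi> x) * chi (dotp \<phi> y) = chi (dotp \<phi> (vadd x y))"
    if "\<phi> \<in> vecs n" "x \<in> X" "y \<in> Y" for \<phi> x y
  proof -
    have "length \<phi> = n" "length x = n" "length y = n"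
      using that XV YV by auto
    then show ?thesis
      by (simp add: chi_xor[symmetric] dotp_vadd_right)
  qed
  then have "(\<Sum>\<phi>\<in>vecs n. (\<Sum>x\<in>X. chi (dotp \<phi> x)) * (\<Sum>y\<in>Y. chi (dotp \<phi> y))) =
      (\<Sum>\<phi>\<in>vecs n. \<Sum>x\<in>X. \<Sum>y\<in>Y. chi (dotp \<phi> (vadd x y)))"
    by (simp add: sum_product)
  also have "\<dots> = (\<Sum>x\<in>X. \<Sum>y\<in>Y. \<Sum>\<phi>\<in>vecs n. chi (dotp \<phi> (vadd x y)))"
    by (subst sum.swap) (rule sum.cong[OF refl], rule sum.swap)
  also have "\<dots> = (\<Sum>x\<in>X. \<Sum>y\<in>Y. if x = y then 2 ^ n else 0)"
    using XV YV by (intro sum.cong) (auto simp: sum_chi_dotp vadd_eq_vzero_iff subset_iff)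
  also have "\<dots> = 2 ^ n * int (card (X \<inter> Y))"
    using XV YV finite_subset_vecs by (simp add: sum.If_cases Int_commute)
  finally show ?thesis .
qed

lemma card_annihilator_Int:
  assumes X: "is_subspace n X" and Y: "is_subspace n Y"
  shows "card X * card Y * card (annihilator n X \<inter> annihilator n Y) = 2 ^ n * card (X \<inter> Y)"
proof -
  let ?A = "annihilator n X \<inter> annihilator n Y"
  let ?S = "\<Sum>\<phi>\<in>vecs n. (\<Sum>x\<in>X. chi (dotp \<phi> x)) * (\<Sum>y\<in>Y. chi (dotp \<phi> y))"
  have "?A \<subseteq> vecs n"
    by (auto simp: annihilator_def)
  have "?S = (\<Sum>\<phi>\<in>vecs n. if \<phi> \<in> ?A then int (card X) * int (card Y) else 0)"
    using X Y by (intro sum.cong) (simp_all add: sum_chi_dotp_subspace)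
  also have "\<dots> = int (card X * card Y * card ?A)"
    by (simp only: sum_if_mem_const[OF finite_vecs] Int_absorb1[OF \<open>?A \<subseteq> vecs n\<close>]) simp
  finally have "?S = int (card X * card Y * card ?A)" .
  moreover have "?S = 2 ^ n * int (card (X \<inter> Y))"
    using X Y by (intro sum_chi_dotp_product) (auto simp: is_subspace_def)
  ultimately have "int (card X * card Y * card ?A) = int (2 ^ n * card (X \<inter> Y))"
    by simp
  then show ?thesis
    by (simp only: of_nat_eq_iff)
qed

lemma card_annihilator:
  assumes "is_subspace n X"
  shows "card X * card (annihilator n X) = 2 ^ n"
proof -
  have "card X > 0"
    using assms by (auto simp: is_subspace_def card_gt_0_iff intro: finite_subset_vecs)
  then show ?thesis
    using card_annihilator_Int[OF assms assms] by (simp add: power2_eq_square mult.assoc)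
qed

section \<open>Quadratic Boolean functions\<close>

definition second_deriv :: "nat \<Rightarrow> (bool list \<Rightarrow> bool) \<Rightarrow> bool list \<Rightarrow> bool list \<Rightarrow> bool" where
  "second_deriv n f x u = ((f (vadd x u) \<noteq> f x) \<noteq> (f u \<noteq> f (vzero n)))"

definition second_deriv_linear :: "nat \<Rightarrow> (bool list \<Rightarrow> bool) \<Rightarrow> bool" where
  "second_deriv_linear n f \<longleftrightarrow> (\<forall>x\<in>vecs n. \<forall>y\<in>vecs n. \<forall>u\<in>vecs n.
     second_deriv n f (vadd x y) u = (second_deriv n f x u \<noteq> second_deriv n f y u))"

lemma second_deriv_commute: "second_deriv n f x u = second_deriv n f u x"
  unfolding second_deriv_def by (auto simp: vadd_commute)

lemma second_deriv_linear_const: "second_deriv_linear n (\<lambda>x. e)"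
  by (simp add: second_deriv_linear_def second_deriv_def)

lemma second_deriv_xor:
  "second_deriv n (\<lambda>x. f x \<noteq> g x) x u = (second_deriv n f x u \<noteq> second_deriv n g x u)"
  by (auto simp: second_deriv_def)

lemma second_deriv_linear_xor:
  "second_deriv_linear n f \<Longrightarrow> second_deriv_linear n g \<Longrightarrow> second_deriv_linear n (\<lambda>x. f x \<noteq> g x)"
  unfolding second_deriv_linear_def second_deriv_xor by auto

lemma second_deriv_linear_parity:
  "finite P \<Longrightarrow> (\<And>p. p \<in> P \<Longrightarrow> second_deriv_linear n (Q p)) \<Longrightarrow>
    second_deriv_linear n (\<lambda>x. odd (card {p \<in> P. Q p x}))"
proof (induction P rule: finite_induct)
  case empty
  show ?case
    using second_deriv_linear_const by simp
next
  case (insert a P)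
  then have "second_deriv_linear n (\<lambda>x. Q a x \<noteq> odd (card {p \<in> P. Q p x}))"
    by (intro second_deriv_linear_xor) auto
  then show ?case
    by (simp only: odd_card_filter_insert[OF insert.hyps])
qed

lemma second_deriv_linear_monomial:
  assumes "i < n" "j < n"
  shows "second_deriv_linear n (\<lambda>x. x ! i \<and> x ! j)"
  using assms unfolding second_deriv_linear_def second_deriv_def by auto

lemma second_deriv_linear_cong:
  assumes "\<And>x. x \<in> vecs n \<Longrightarrow> f x = g x" and "second_deriv_linear n f"
  shows "second_deriv_linear n g"
proof -
  have "second_deriv n f x u = second_deriv n g x u" if "x \<in> vecs n" "u \<in> vecs n" for x u
    using that assms(1) by (simp add: second_deriv_def)
  then show ?thesis
    using assms(2) unfolding second_deriv_linear_def by simp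
qed

lemma second_deriv_linear_component:
  assumes "is_quadratic n F" and "b \<in> vecs n"
  shows "second_deriv_linear n (component F b)"
proof -
  obtain c a e where F_b: "\<forall>x\<in>vecs n. component F b x = (quad_form n c x \<noteq> affine_fun n a e x)"
    using assms unfolding is_quadratic_def by blast
  let ?Q = "{(i, j). i \<le> j \<and> j < n \<and> c i j}" and ?A = "{i. i < n \<and> a i}"
  have "finite ?Q"
    by (rule finite_subset[of _ "{..<n} \<times> {..<n}"]) auto
  then have "second_deriv_linear n (\<lambda>x. odd (card {p \<in> ?Q. x ! fst p \<and> x ! snd p}))"
    by (intro second_deriv_linear_parity second_deriv_linear_monomial) auto
  moreover have "second_deriv_linear n (\<lambda>x. odd (card {i \<in> ?A. x ! i \<and> x ! i}))"
    by (intro second_deriv_linear_parity second_deriv_linear_monomial) auto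
  ultimately have "second_deriv_linear n (\<lambda>x. odd (card {p \<in> ?Q. x ! fst p \<and> x ! snd p}) \<noteq>
      (odd (card {i \<in> ?A. x ! i \<and> x ! i}) \<noteq> e))"
    by (intro second_deriv_linear_xor second_deriv_linear_const)
  moreover have "{(i, j). i \<le> j \<and> j < n \<and> c i j \<and> x ! i \<and> x ! j} = {p \<in> ?Q. x ! fst p \<and> x ! snd p}"
    and "{i. i < n \<and> a i \<and> x ! i} = {i \<in> ?A. x ! i \<and> x ! i}" for x
    by auto
  then have "quad_form n c x = odd (card {p \<in> ?Q. x ! fst p \<and> x ! snd p})"
    and "affine_fun n a e x = (odd (card {i \<in> ?A. x ! i \<and> x ! i}) \<noteq> e)" for x
    unfolding quad_form_def affine_fun_def by simp_all
  ultimately show ?thesis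
    using F_b by (intro second_deriv_linear_cong[of n _ "component F b"]) auto
qed

definition linear_space :: "nat \<Rightarrow> (bool list \<Rightarrow> bool) \<Rightarrow> bool list set" where
  "linear_space n f = {u \<in> vecs n. \<forall>x\<in>vecs n. \<not> second_deriv n f x u}"

lemma linear_space_subset: "linear_space n f \<subseteq> vecs n"
  by (auto simp: linear_space_def)

lemma vzero_in_linear_space: "vzero n \<in> linear_space n f"
  by (simp add: linear_space_def second_deriv_def)

lemma is_subspace_linear_space:
  assumes "second_deriv_linear n f"
  shows "is_subspace n (linear_space n f)"
proof -
  have "vadd u v \<in> linear_space n f" if "u \<in> linear_space n f" "v \<in> linear_space n f" for u v
    using that assms second_deriv_commute[of n f]
    by (simp add: linear_space_def second_deriv_linear_def)
  then show ?thesis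
    unfolding is_subspace_def using linear_space_subset vzero_in_linear_space by blast
qed

lemma sum_chi_second_deriv:
  assumes "second_deriv_linear n f" and "u \<in> vecs n"
  shows "(\<Sum>x\<in>vecs n. chi (second_deriv n f x u)) = (if u \<in> linear_space n f then 2 ^ n else 0)"
  using assms sum_chi_additive[OF is_subspace_vecs, where g = "\<lambda>x. second_deriv n f x u"]
  by (simp add: second_deriv_linear_def linear_space_def)

section \<open>Walsh spectra of quadratic functions\<close>

definition walsh_bool :: "nat \<Rightarrow> (bool list \<Rightarrow> bool) \<Rightarrow> bool list \<Rightarrow> int" where
  "walsh_bool n f a = (\<Sum>x\<in>vecs n. chi (f x \<noteq> dotp x a))"

lemma minus_one_power_if: "(-1 :: int) ^ (if P then 1 else 0) = chi P"
  by (simp add: chi_def)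

lemma walsh_eq_walsh_bool: "walsh n F b a = walsh_bool n (component F b) a"
  unfolding walsh_def walsh_bool_def minus_one_power_if ..

lemma walsh_bool_square_eq_double_sum:
  "(walsh_bool n f a)\<^sup>2 = (\<Sum>x\<in>vecs n. \<Sum>y\<in>vecs n. chi (f x \<noteq> dotp x a) * chi (f y \<noteq> dotp y a))"
  unfolding walsh_bool_def power2_eq_square by (rule sum_product)

lemma sum_walsh_bool_square: "(\<Sum>a\<in>vecs n. (walsh_bool n f a)\<^sup>2) = 2 ^ n * 2 ^ n"
proof -
  have chi_pair:
    "chi (f x \<noteq> dotp x a) * chi (f y \<noteq> dotp y a) = chi (f x \<noteq> f y) * chi (dotp a (vadd x y))"
    if "x \<in> vecs n" "y \<in> vecs n" "a \<in> vecs n" for x y a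
  proof -
    have "dotp a (vadd x y) = (dotp x a \<noteq> dotp y a)"
      using that dotp_vadd_right[of a n x y] dotp_commute by simp
    then show ?thesis
      unfolding chi_xor[symmetric] by (intro arg_cong[of _ _ chi]) argo
  qed
  have "(\<Sum>a\<in>vecs n. (walsh_bool n f a)\<^sup>2) =
      (\<Sum>a\<in>vecs n. \<Sum>x\<in>vecs n. \<Sum>y\<in>vecs n. chi (f x \<noteq> f y) * chi (dotp a (vadd x y)))"
    unfolding walsh_bool_square_eq_double_sum by (intro sum.cong refl chi_pair)
  also have "\<dots> = (\<Sum>x\<in>vecs n. \<Sum>y\<in>vecs n. \<Sum>a\<in>vecs n. chi (f x \<noteq> f y) * chi (dotp a (vadd x y)))"
    by (subst sum.swap) (rule sum.cong[OF refl], rule sum.swap)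
  also have "\<dots> = (\<Sum>x\<in>vecs n. \<Sum>y\<in>vecs n. chi (f x \<noteq> f y) * (\<Sum>a\<in>vecs n. chi (dotp a (vadd x y))))"
    by (simp only: sum_distrib_left)
  also have "\<dots> = (\<Sum>x\<in>vecs n. \<Sum>y\<in>vecs n. if x = y then 2 ^ n else 0)"
    by (intro sum.cong) (auto simp: sum_chi_dotp vadd_eq_vzero_iff)
  also have "\<dots> = 2 ^ n * 2 ^ n"
    by simp
  finally show ?thesis .
qed

lemma sum_vecs_translate:
  assumes "x \<in> vecs n"
  shows "(\<Sum>y\<in>vecs n. g y) = (\<Sum>u\<in>vecs n. g (vadd x u))"
  using assms
  by (intro sum.reindex_bij_witness[of _ "vadd x" "vadd x"]) (auto simp: vadd_vadd_cancel_left)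

lemma walsh_bool_square:
  assumes f: "second_deriv_linear n f" and a: "a \<in> vecs n"
  shows "(walsh_bool n f a)\<^sup>2 = 2 ^ n * (\<Sum>u\<in>linear_space n f. chi ((f u \<noteq> f (vzero n)) \<noteq> dotp u a))"
proof -
  define h where "h u = chi ((f u \<noteq> f (vzero n)) \<noteq> dotp u a)" for u
  have chi_pair: "chi (f x \<noteq> dotp x a) * chi (f (vadd x u) \<noteq> dotp (vadd x u) a) =
      chi (second_deriv n f x u) * h u"
    if "x \<in> vecs n" "u \<in> vecs n" for x u
  proof -
    have "dotp (vadd x u) a = (dotp x a \<noteq> dotp u a)"
      using that a by (simp add: dotp_vadd_left)
    then show ?thesis
      unfolding h_def second_deriv_def chi_xor[symmetric] by (intro arg_cong[of _ _ chi]) argo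
  qed
  have "(walsh_bool n f a)\<^sup>2 =
      (\<Sum>x\<in>vecs n. \<Sum>u\<in>vecs n. chi (f x \<noteq> dotp x a) * chi (f (vadd x u) \<noteq> dotp (vadd x u) a))"
    unfolding walsh_bool_square_eq_double_sum by (rule sum.cong[OF refl], rule sum_vecs_translate)
  also have "\<dots> = (\<Sum>x\<in>vecs n. \<Sum>u\<in>vecs n. chi (second_deriv n f x u) * h u)"
    by (intro sum.cong refl chi_pair)
  also have "\<dots> = (\<Sum>u\<in>vecs n. (\<Sum>x\<in>vecs n. chi (second_deriv n f x u)) * h u)"
    by (subst sum.swap) (simp only: sum_distrib_right)
  also have "\<dots> = (\<Sum>u\<in>vecs n. if u \<in> linear_space n f then 2 ^ n * h u else 0)"
    using f by (intro sum.cong) (simp_all add: sum_chi_second_deriv)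
  also have "\<dots> = 2 ^ n * (\<Sum>u\<in>linear_space n f. h u)"
    using linear_space_subset
    by (simp add: sum.inter_restrict[symmetric] Int_absorb1 sum_distrib_left)
  finally show ?thesis
    unfolding h_def .
qed

lemma walsh_bool_square_cases:
  assumes f: "second_deriv_linear n f" and a: "a \<in> vecs n"
  shows "(walsh_bool n f a)\<^sup>2 \<in> {0, 2 ^ n * int (card (linear_space n f))}"
proof -
  let ?g = "\<lambda>u. (f u \<noteq> f (vzero n)) \<noteq> dotp u a"
  \<comment> \<open>on the linear space, \<open>f + f(0)\<close> is linear because its second derivative vanishes there\<close>
  have "?g (vadd u v) = (?g u \<noteq> ?g v)" if "u \<in> linear_space n f" "v \<in> linear_space n f" for u v
  proof -
    have "\<not> second_deriv n f u v" "u \<in> vecs n" "v \<in> vecs n"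
      using that by (auto simp: linear_space_def)
    then show ?thesis
      using a by (auto simp: second_deriv_def dotp_vadd_left)
  qed
  then have "(\<Sum>u\<in>linear_space n f. chi (?g u)) \<in> {0, int (card (linear_space n f))}"
    using sum_chi_additive[OF is_subspace_linear_space[OF f], of ?g] by auto
  then show ?thesis
    unfolding walsh_bool_square[OF f a] by auto
qed

lemma ex_walsh_bool_square_eq:
  assumes "second_deriv_linear n f"
  shows "\<exists>a\<in>vecs n. (walsh_bool n f a)\<^sup>2 = 2 ^ n * int (card (linear_space n f))"
proof (rule ccontr)
  assume "\<not> ?thesis"
  then have "(\<Sum>a\<in>vecs n. (walsh_bool n f a)\<^sup>2) = 0"
    using walsh_bool_square_cases[OF assms] by (intro sum.neutral) blast
  then show False
    using sum_walsh_bool_square[of n f] by simp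
qed

lemma walsh_bool_square_if_linear_space_trivial:
  assumes "second_deriv_linear n f" and "linear_space n f = {vzero n}" and "a \<in> vecs n"
  shows "(walsh_bool n f a)\<^sup>2 = 2 ^ n"
  using walsh_bool_square[OF assms(1,3)] assms(2) by simp

lemma abs_eq_two_powr_half_iff: "\<bar>real_of_int w\<bar> = 2 powr (real n / 2) \<longleftrightarrow> w\<^sup>2 = 2 ^ n"
proof -
  have "(2 powr (real n / 2))\<^sup>2 = (2 :: real) ^ n"
    by (simp add: powr_power powr_realpow)
  have "\<bar>real_of_int w\<bar> = 2 powr (real n / 2) \<longleftrightarrow> \<bar>real_of_int w\<bar>\<^sup>2 = (2 powr (real n / 2))\<^sup>2"
    by (rule power2_eq_iff_nonneg[symmetric]) auto
  also have "\<dots> \<longleftrightarrow> real_of_int (w\<^sup>2) = real_of_int (2 ^ n)"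
    using \<open>(2 powr (real n / 2))\<^sup>2 = 2 ^ n\<close> by simp
  also have "\<dots> \<longleftrightarrow> w\<^sup>2 = 2 ^ n"
    by (rule of_int_eq_iff)
  finally show ?thesis .
qed

lemma is_bent_comp_iff:
  assumes "is_quadratic n F" and b: "b \<in> vecs n"
  shows "is_bent_comp n F b \<longleftrightarrow> linear_space n (component F b) = {vzero n}"
proof
  let ?V = "linear_space n (component F b)"
  have f: "second_deriv_linear n (component F b)"
    using assms by (rule second_deriv_linear_component)
  assume "is_bent_comp n F b"
  then have "(walsh_bool n (component F b) (vzero n))\<^sup>2 = 2 ^ n"
    by (simp add: is_bent_comp_def abs_eq_two_powr_half_iff walsh_eq_walsh_bool)
  then have "card ?V = 1"
    using walsh_bool_square_cases[OF f, of "vzero n"] by auto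
  then show "?V = {vzero n}"
    using vzero_in_linear_space by (metis card_1_singletonE singletonD)
next
  assume "linear_space n (component F b) = {vzero n}"
  then show "is_bent_comp n F b"
    using walsh_bool_square_if_linear_space_trivial second_deriv_linear_component[OF assms]
    by (simp add: is_bent_comp_def abs_eq_two_powr_half_iff walsh_eq_walsh_bool)
qed

lemma card_linear_space_le_linearity:
  assumes "is_quadratic n F" and b: "b \<in> vecs n" "b \<noteq> vzero n"
  shows "2 ^ n * int (card (linear_space n (component F b))) \<le> (linearity n F)\<^sup>2"
proof -
  obtain a where a: "a \<in> vecs n"
    and W: "(walsh n F b a)\<^sup>2 = 2 ^ n * int (card (linear_space n (component F b)))"
    using ex_walsh_bool_square_eq[OF second_deriv_linear_component[OF assms(1,2)]]
    unfolding walsh_eq_walsh_bool by blast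
  have "finite {\<bar>walsh n F b a\<bar> | a b. a \<in> vecs n \<and> b \<in> vecs n \<and> b \<noteq> vzero n}"
    by (rule finite_image_set2) (simp_all del: in_vecs_iff)
  then have "\<bar>walsh n F b a\<bar> \<le> linearity n F"
    unfolding linearity_def using a b by (intro Max_ge) blast+
  then show ?thesis
    unfolding W[symmetric] by (metis abs_ge_zero power2_abs power_mono)
qed

section \<open>Quadratic APN functions\<close>

lemma second_deriv_component:
  assumes "maps_into n F" and "b \<in> vecs n" "x \<in> vecs n" "a \<in> vecs n"
  shows "second_deriv n (component F b) x a =
    dotp b (vadd (vadd (F (vadd x a)) (F x)) (vadd (F a) (F (vzero n))))"
  using assms by (simp add: maps_into_def second_deriv_def component_def dotp_vadd_right)

lemma linear_space_component_vzero: "linear_space n (component F (vzero n)) = vecs n"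
  by (auto simp: linear_space_def second_deriv_def component_def)

lemma card_components_with_linear_vector:
  assumes F: "maps_into n F" "is_quadratic n F" "is_APN n F"
    and a: "a \<in> vecs n" "a \<noteq> vzero n"
  shows "card {b \<in> vecs n. a \<in> linear_space n (component F b)} = 2"
proof -
  define G where "G x = vadd (vadd (F (vadd x a)) (F x)) (vadd (F a) (F (vzero n)))" for x
  define c where "c = vadd (F a) (F (vzero n))"
  have FV: "x \<in> vecs n \<Longrightarrow> F x \<in> vecs n" for x
    using F(1) by (simp add: maps_into_def)
  have G_eq_vzero: "G x = vzero n \<longleftrightarrow> vadd (F x) (F (vadd x a)) = c" if "x \<in> vecs n" for x
    using that a FV[of x] FV[of "vadd x a"] FV[of a] FV[of "vzero n"]
    by (auto simp: G_def c_def vadd_eq_vzero_iff vadd_commute)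
  define S where "S = {x \<in> vecs n. vadd (F x) (F (vadd x a)) = c}"
  have "card S \<le> 2"
    using F(3) a FV[of a] FV[of "vzero n"] by (simp add: is_APN_def S_def c_def)
  moreover have "{vzero n, a} \<subseteq> S"
    using a by (simp add: S_def c_def vadd_commute)
  moreover have "finite S"
    unfolding S_def by (rule finite_subset[OF _ finite_vecs[of n]]) blast
  ultimately have card_S: "card S = 2"
    using a(2) card_mono[of S "{vzero n, a}"] by simp
  \<comment> \<open>sum \<open>chi (dotp b (G x))\<close> over \<open>b\<close> and \<open>x\<close> in either order\<close>
  have "(\<Sum>b\<in>vecs n. \<Sum>x\<in>vecs n. chi (dotp b (G x))) =
      (\<Sum>b\<in>vecs n. if a \<in> linear_space n (component F b) then 2 ^ n else 0)"
    using F a by (intro sum.cong refl)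
      (simp add: G_def second_deriv_component[symmetric] sum_chi_second_deriv
        second_deriv_linear_component)
  also have "\<dots> = 2 ^ n * int (card {b \<in> vecs n. a \<in> linear_space n (component F b)})"
    by (simp add: sum.If_cases Int_def)
  finally have lhs: "(\<Sum>b\<in>vecs n. \<Sum>x\<in>vecs n. chi (dotp b (G x))) =
      2 ^ n * int (card {b \<in> vecs n. a \<in> linear_space n (component F b)})" .
  have "(\<Sum>b\<in>vecs n. \<Sum>x\<in>vecs n. chi (dotp b (G x))) =
      (\<Sum>x\<in>vecs n. if G x = vzero n then 2 ^ n else 0)"
    using a FV by (subst sum.swap) (intro sum.cong refl sum_chi_dotp, simp add: G_def)
  also have "\<dots> = 2 ^ n * int (card S)"
    using G_eq_vzero by (simp add: sum.If_cases S_def Int_def conj_commute cong: rev_conj_cong)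
  finally show ?thesis
    using lhs card_S by simp
qed

lemma unique_component_with_linear_vector:
  assumes "maps_into n F" "is_quadratic n F" "is_APN n F"
    and "a \<in> vecs n" "a \<noteq> vzero n"
  shows "\<exists>!b. b \<in> vecs n \<and> b \<noteq> vzero n \<and> a \<in> linear_space n (component F b)"
proof -
  let ?B = "{b \<in> vecs n. a \<in> linear_space n (component F b)}"
  have "vzero n \<in> ?B"
    using assms by (simp add: linear_space_component_vzero)
  moreover obtain b b' where "?B = {b, b'}" "b \<noteq> b'"
    using card_components_with_linear_vector[OF assms] by (auto simp: card_2_iff)
  ultimately obtain c where B: "?B = {vzero n, c}" and c: "c \<noteq> vzero n"
    by (metis insert_commute insertE singletonD)
  have "c \<in> ?B"
    unfolding B by simp
  show ?thesis
  proof (rule ex1I[of _ c])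
    show "c \<in> vecs n \<and> c \<noteq> vzero n \<and> a \<in> linear_space n (component F c)"
      using \<open>c \<in> ?B\<close> c by simp
  next
    fix b assume "b \<in> vecs n \<and> b \<noteq> vzero n \<and> a \<in> linear_space n (component F b)"
    then have "b \<in> ?B - {vzero n}"
      by simp
    then show "b = c"
      unfolding B by simp
  qed
qed

section \<open>Vector space partitions\<close>

locale vs_partition =
  fixes n :: nat and I :: "'i set" and U :: "'i \<Rightarrow> bool list set"
  assumes finite_index: "finite I"
    and subspace_block: "i \<in> I \<Longrightarrow> is_subspace n (U i)"
    and nontrivial_block: "i \<in> I \<Longrightarrow> U i \<noteq> {vzero n}"
    and disjoint_blocks: "i \<in> I \<Longrightarrow> j \<in> I \<Longrightarrow> i \<noteq> j \<Longrightarrow> U i \<inter> U j = {vzero n}"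
    and covering: "x \<in> vecs n \<Longrightarrow> x \<noteq> vzero n \<Longrightarrow> \<exists>i\<in>I. x \<in> U i"
begin

lemma block_subset: "i \<in> I \<Longrightarrow> U i \<subseteq> vecs n"
  using subspace_block by (simp add: is_subspace_def)

lemma finite_block: "i \<in> I \<Longrightarrow> finite (U i)"
  using block_subset finite_subset_vecs by blast

lemma vzero_in_block: "i \<in> I \<Longrightarrow> vzero n \<in> U i"
  using subspace_block by (simp add: is_subspace_def)

lemma card_block_eq_power:
  assumes "i \<in> I"
  obtains h where "1 \<le> h" and "card (U i) = 2 ^ h"
proof -
  have "card (U i) dvd 2 ^ n"
    using card_annihilator[OF subspace_block[OF assms]] by (metis dvd_triv_left)
  then obtain h where h: "card (U i) = 2 ^ h"
    by (auto simp: divides_primepow_nat)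
  have "card (U i) \<noteq> 1"
    using assms nontrivial_block vzero_in_block by (metis card_1_singletonE singletonD)
  then have "1 \<le> h"
    using h by (cases h) auto
  then show ?thesis
    using h that by blast
qed

lemma sum_nonzero_vectors:
  "(\<Sum>x\<in>vecs n - {vzero n}. g x) = (\<Sum>i\<in>I. \<Sum>x\<in>U i - {vzero n}. g x)"
proof -
  have "vecs n - {vzero n} = (\<Union>i\<in>I. U i - {vzero n})"
    using covering block_subset by blast
  moreover have "\<forall>i\<in>I. \<forall>j\<in>I. i \<noteq> j \<longrightarrow> (U i - {vzero n}) \<inter> (U j - {vzero n}) = {}"
    using disjoint_blocks by blast
  then have "sum g (\<Union>i\<in>I. U i - {vzero n}) = (\<Sum>i\<in>I. \<Sum>x\<in>U i - {vzero n}. g x)"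
    using finite_index finite_block by (intro sum.UNION_disjoint) auto
  ultimately show ?thesis
    by (simp only:)
qed

lemma sum_card_blocks: "(\<Sum>i\<in>I. int (card (U i)) - 1) = 2 ^ n - 1"
proof -
  have "int (card (vecs n - {vzero n})) = (\<Sum>i\<in>I. int (card (U i - {vzero n})))"
    using sum_nonzero_vectors[of "\<lambda>_. 1 :: int"] by simp
  also have "\<dots> = (\<Sum>i\<in>I. int (card (U i)) - 1)"
    using finite_block vzero_in_block by (intro sum.cong refl int_card_Diff_singleton)
  finally show ?thesis
    by simp
qed

lemma sum_card_blocks_annihilated:
  assumes "\<phi> \<in> vecs n" "\<phi> \<noteq> vzero n"
  shows "(\<Sum>i\<in>I. if \<phi> \<in> annihilator n (U i) then int (card (U i)) else 0) = int (card I) - 1"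
proof -
  have "(\<Sum>x\<in>vecs n - {vzero n}. chi (dotp \<phi> x)) = -1"
    using sum_chi_dotp[OF assms(1)] assms(2)
      sum.remove[OF finite_vecs vzero_in_vecs, of "\<lambda>x. chi (dotp x \<phi>)"]
    by (simp add: dotp_commute)
  moreover have "(\<Sum>x\<in>U i - {vzero n}. chi (dotp \<phi> x)) =
      (if \<phi> \<in> annihilator n (U i) then int (card (U i)) else 0) - 1" if "i \<in> I" for i
    using sum_chi_dotp_subspace[OF subspace_block[OF that] assms(1)]
      sum.remove[OF finite_block[OF that] vzero_in_block[OF that], of "\<lambda>x. chi (dotp \<phi> x)"]
    by simp
  ultimately show ?thesis
    using sum_nonzero_vectors[of "\<lambda>x. chi (dotp \<phi> x)"] by (simp add: sum_subtractf)
qed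

lemma card_index_ge:
  assumes "\<And>i. i \<in> I \<Longrightarrow> card (U i) \<le> 2 ^ k"
  shows "2 ^ n - 1 \<le> int (card I) * (2 ^ k - 1)"
proof -
  have "(\<Sum>i\<in>I. int (card (U i)) - 1) \<le> (\<Sum>i\<in>I. 2 ^ k - 1)"
    using assms
    by (intro sum_mono) (metis diff_right_mono of_nat_le_iff of_nat_numeral of_nat_power)
  then show ?thesis
    using sum_card_blocks by simp
qed

lemma card_index_ge_real:
  assumes "\<And>i. i \<in> I \<Longrightarrow> card (U i) \<le> 2 ^ k" and "0 < k"
  shows "(2 ^ n - 1) / (2 ^ k - 1) \<le> real (card I)"
proof -
  have "real_of_int (2 ^ n - 1) \<le> real_of_int (int (card I) * (2 ^ k - 1))"
    using card_index_ge[OF assms(1)] by (simp only: of_int_le_iff)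
  moreover have "(1 :: real) < 2 ^ k"
    using assms(2) by simp
  ultimately show ?thesis
    by (simp add: divide_le_eq)
qed

end

section \<open>Counting blocks when the dimension bound does not divide \<open>n\<close>\<close>

lemma mult_sub_square_less:
  fixes a b q :: int
  assumes "2 \<le> a" "a \<le> 2 * b"
  shows "a * (2 * q - 4) - q * q < 4 * (a * b) - 4"
proof -
  have "0 \<le> q * q - 2 * (a * q) + a * a"
    using zero_le_square[of "q - a"] by (simp add: algebra_simps)
  moreover have "a * a \<le> 2 * (a * b)"
    using mult_left_mono[of a "2 * b" a] assms by simp
  moreover have "2 * 1 \<le> a * b"
    using assms by (intro mult_mono) simp_all
  ultimately have "2 * (a * q) - 4 * a - q * q < 4 * (a * b) - 4"
    using assms(1) by linarith
  then show ?thesis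
    by (simp add: algebra_simps)
qed

lemma nat_ceiling_half: "nat \<lceil>real m / 2\<rceil> = (m + 1) div 2"
proof -
  have "\<lceil>real m / 2\<rceil> = int ((m + 1) div 2)"
    by (cases "even m") (auto elim!: evenE oddE simp: ceiling_eq_iff)
  then show ?thesis
    by simp
qed

lemma geometric_sum_power:
  fixes q :: int
  shows "(\<Sum>i = 0..m. q ^ i) * (q - 1) = q ^ Suc m - 1"
  using sum_gp_multiplied[of 0 m q] by (simp add: algebra_simps)

locale vs_partition_nondiv = vs_partition n I U for n and I :: "'i set" and U +
  fixes k s r :: nat
  assumes card_block_le: "i \<in> I \<Longrightarrow> card (U i) \<le> 2 ^ k"
    and n_eq: "n = s * k + r"
    and r_pos: "0 < r" and r_less_k: "r < k"
    and two_k_le_n: "2 * k \<le> n"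
begin

definition block_size :: "'i \<Rightarrow> int" where
  "block_size i = int (card (U i))"

definition small_blocks :: "'i set" where
  "small_blocks = {i \<in> I. card (U i) < 2 ^ k}"

definition base_count :: int where
  "base_count = 2 ^ (k + r) * (\<Sum>i = 0..s - 2. 2 ^ (i * k))"

definition excess :: int where
  "excess = int (card I) - 1 - base_count"

definition small_weight :: "bool list \<Rightarrow> int" where
  "small_weight \<phi> = (\<Sum>i\<in>small_blocks. if \<phi> \<in> annihilator n (U i) then block_size i else 0)"

lemma two_le_s: "2 \<le> s"
proof (rule ccontr)
  assume "\<not> 2 \<le> s"
  then have "s = 0 \<or> s = 1"
    by arith
  then have "n < 2 * k"
    using n_eq r_less_k by auto
  then show False
    using two_k_le_n by simp
qed

lemma two_le_two_pow_k: "(2 :: int) \<le> 2 ^ k"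
  using r_pos r_less_k power_increasing[of 1 k "2 :: int"] by simp

lemma one_less_two_pow_n: "(1 :: int) < 2 ^ n"
  using two_k_le_n r_pos r_less_k by simp

lemma base_count_mult: "base_count * (2 ^ k - 1) = 2 ^ n - 2 ^ (k + r)"
proof -
  define G :: int where "G = (\<Sum>i = 0..s - 2. 2 ^ (i * k))"
  have geo: "G * (2 ^ k - 1) = 2 ^ (Suc (s - 2) * k) - 1"
    using geometric_sum_power[of "2 ^ k" "s - 2"] unfolding G_def
    by (simp add: power_mult[symmetric] power_add mult.commute)
  have "base_count * (2 ^ k - 1) = 2 ^ (k + r) * (G * (2 ^ k - 1))"
    unfolding base_count_def G_def by (simp only: mult.assoc)
  also have "\<dots> = 2 ^ (k + r + Suc (s - 2) * k) - 2 ^ (k + r)"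
    unfolding geo by (simp add: right_diff_distrib power_add)
  also have "k + r + Suc (s - 2) * k = n"
    using n_eq two_le_s by (cases s) auto
  finally show ?thesis .
qed

lemma two_pow_k_dvd_base_count: "2 ^ k dvd base_count"
  unfolding base_count_def by (simp add: power_add)

lemma finite_small_blocks: "finite small_blocks"
  using finite_index by (simp add: small_blocks_def)

lemma block_size_eq_power:
  assumes "i \<in> I"
  obtains h where "1 \<le> h" "h \<le> k" "block_size i = 2 ^ h"
proof -
  obtain h where h: "1 \<le> h" "card (U i) = 2 ^ h"
    using card_block_eq_power[OF assms] .
  moreover have "h \<le> k"
    using card_block_le[OF assms] h by (simp add: power_le_imp_le_exp)
  ultimately show ?thesis
    using that by (simp add: block_size_def)
qed

lemma block_size_nonneg [simp]: "0 \<le> block_size i"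
  by (simp add: block_size_def)

lemma block_size_bounds:
  assumes "i \<in> I"
  shows "2 \<le> block_size i \<and> block_size i \<le> 2 ^ k"
proof -
  obtain h where "1 \<le> h" "h \<le> k" "block_size i = 2 ^ h"
    using block_size_eq_power[OF assms] .
  then show ?thesis
    using power_increasing[of 1 h "2 :: int"] power_increasing[of h k "2 :: int"] by simp
qed

lemma block_size_small: "i \<in> small_blocks \<Longrightarrow> 2 \<le> block_size i \<and> 2 * block_size i \<le> 2 ^ k"
proof -
  assume i: "i \<in> small_blocks"
  then obtain h where "1 \<le> h" "h \<le> k" "block_size i = 2 ^ h"
    by (auto simp: small_blocks_def elim: block_size_eq_power)
  moreover have "h \<noteq> k"
    using i \<open>block_size i = 2 ^ h\<close> by (auto simp: small_blocks_def block_size_def)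
  then have "2 * block_size i \<le> 2 ^ k"
    using \<open>block_size i = 2 ^ h\<close> \<open>h \<le> k\<close> power_increasing[of "Suc h" k "2 :: int"] by simp
  then show ?thesis
    using block_size_bounds i by (simp add: small_blocks_def)
qed

lemma sum_split_small_blocks:
  "(\<Sum>i\<in>I. g i) = (\<Sum>i\<in>I - small_blocks. g i) + (\<Sum>i\<in>small_blocks. g i)"
  using finite_index by (intro sum.subset_diff) (auto simp: small_blocks_def)

lemma block_size_not_small: "i \<in> I - small_blocks \<Longrightarrow> block_size i = 2 ^ k"
  using card_block_le by (force simp: small_blocks_def block_size_def)

lemma excess_pos: "0 < excess"
proof -
  have "2 ^ n - 1 \<le> int (card I) * (2 ^ k - 1)"
    using card_index_ge card_block_le by blast
  moreover have "(2 :: int) ^ (k + 1) \<le> 2 ^ (k + r)"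
    using r_pos by (intro power_increasing) auto
  ultimately have "(base_count + 1) * (2 ^ k - 1) < int (card I) * (2 ^ k - 1)"
    using base_count_mult
    by (simp add: algebra_simps) (use zero_less_power[of "2 :: int" k] in linarith)
  then show ?thesis
    unfolding excess_def by (simp add: mult_less_cancel_right)
qed

lemma sum_small_block_sizes:
  "(1 + excess - int (card small_blocks)) * (2 ^ k - 1) +
    ((\<Sum>i\<in>small_blocks. block_size i) - int (card small_blocks)) =
    2 ^ (k + r) - 1"
proof -
  have "2 ^ n - 1 = (\<Sum>i\<in>I. block_size i - 1)"
    using sum_card_blocks by (simp add: block_size_def)
  also have "\<dots> = (\<Sum>i\<in>I - small_blocks. block_size i - 1) + (\<Sum>i\<in>small_blocks. block_size i - 1)"
    by (rule sum_split_small_blocks)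
  also have "\<dots> = int (card I - card small_blocks) * (2 ^ k - 1) +
      ((\<Sum>i\<in>small_blocks. block_size i) - int (card small_blocks))"
    using finite_index
    by (simp add: block_size_not_small sum_subtractf card_Diff_subset small_blocks_def)
  finally show ?thesis
    using base_count_mult card_mono[OF finite_index, of small_blocks]
    by (simp add: excess_def small_blocks_def algebra_simps)
qed

lemma small_weight_cong:
  assumes "\<phi> \<in> vecs n" "\<phi> \<noteq> vzero n"
  obtains j where "small_weight \<phi> = excess + 2 ^ k * j"
proof -
  let ?full = "{i \<in> I - small_blocks. \<phi> \<in> annihilator n (U i)}"
  have "int (card I) - 1 = (\<Sum>i\<in>I. if \<phi> \<in> annihilator n (U i) then block_size i else 0)"
    unfolding block_size_def using sum_card_blocks_annihilated[OF assms] ..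
  also have "\<dots> = (\<Sum>i\<in>I - small_blocks. if \<phi> \<in> annihilator n (U i) then block_size i else 0) +
      small_weight \<phi>"
    unfolding small_weight_def by (rule sum_split_small_blocks)
  also have "(\<Sum>i\<in>I - small_blocks. if \<phi> \<in> annihilator n (U i) then block_size i else 0) =
      2 ^ k * int (card ?full)"
    using finite_index by (simp add: sum.If_cases block_size_not_small Int_def)
  finally have "small_weight \<phi> = excess + 2 ^ k * (base_count div 2 ^ k - int (card ?full))"
    using two_pow_k_dvd_base_count by (simp add: excess_def algebra_simps)
  then show ?thesis
    using that by blast
qed

lemma card_nonzero_annihilator:
  assumes "i \<in> I"
  shows "block_size i * int (card (annihilator n (U i) - {vzero n})) = 2 ^ n - block_size i"
proof -
  have card_A: "int (card (annihilator n (U i) - {vzero n})) = int (card (annihilator n (U i))) - 1"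
    using finite_subset_vecs[OF annihilator_subset] vzero_in_annihilator
    by (rule int_card_Diff_singleton)
  have "block_size i * int (card (annihilator n (U i))) = 2 ^ n"
    using card_annihilator[OF subspace_block[OF assms]] unfolding block_size_def
    by (metis of_nat_mult of_nat_numeral of_nat_power)
  then show ?thesis
    unfolding card_A by (simp add: algebra_simps)
qed

lemma card_nonzero_annihilator_Int:
  assumes "i \<in> I" "j \<in> I" "i \<noteq> j"
  shows "block_size i * int (card (annihilator n (U i) \<inter> annihilator n (U j) - {vzero n})) =
    int (card (annihilator n (U j))) - block_size i"
proof -
  let ?A = "annihilator n (U i) \<inter> annihilator n (U j)"
  have "card (U i) * card (U j) * card ?A = 2 ^ n"
    using card_annihilator_Int[OF subspace_block[OF assms(1)] subspace_block[OF assms(2)]]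
      disjoint_blocks[OF assms] by simp
  moreover have "card (U j) * card (annihilator n (U j)) = 2 ^ n"
    by (rule card_annihilator[OF subspace_block[OF assms(2)]])
  moreover have "0 < card (U j)"
    using finite_block[OF assms(2)] vzero_in_block[OF assms(2)] card_gt_0_iff by blast
  ultimately have "card (U i) * card ?A = card (annihilator n (U j))"
    by (metis mult.assoc mult.commute mult_left_cancel not_gr0)
  moreover have "int (card (?A - {vzero n})) = int (card ?A) - 1"
    by (rule int_card_Diff_singleton) (auto intro: finite_subset_vecs[of _ n] simp: annihilator_def)
  ultimately show ?thesis
    unfolding block_size_def by (simp add: algebra_simps flip: of_nat_mult)
qed

lemma sum_small_weight_eq:
  "finite A \<Longrightarrow> (\<Sum>\<phi>\<in>A. small_weight \<phi>) =
    (\<Sum>i\<in>small_blocks. block_size i * int (card (A \<inter> annihilator n (U i))))"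
  unfolding small_weight_def by (subst sum.swap) (simp add: sum_if_mem_const mult.commute)

lemma sum_small_weight:
  "(\<Sum>\<phi>\<in>vecs n - {vzero n}. small_weight \<phi>) =
    int (card small_blocks) * 2 ^ n - (\<Sum>i\<in>small_blocks. block_size i)"
proof -
  have "(\<Sum>\<phi>\<in>vecs n - {vzero n}. small_weight \<phi>) =
      (\<Sum>i\<in>small_blocks. block_size i * int (card (annihilator n (U i) - {vzero n})))"
  proof -
    have "(vecs n - {vzero n}) \<inter> annihilator n X = annihilator n X - {vzero n}" for X
      by (auto simp: annihilator_def)
    then show ?thesis
      by (simp only: sum_small_weight_eq finite_Diff finite_vecs)
  qed
  also have "\<dots> = (\<Sum>i\<in>small_blocks. 2 ^ n - block_size i)"
    using card_nonzero_annihilator by (intro sum.cong refl) (auto simp: small_blocks_def)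
  finally show ?thesis
    by (simp add: sum_subtractf)
qed

lemma sum_small_weight_annihilator:
  assumes i1: "i1 \<in> small_blocks"
  defines "P \<equiv> int (card (annihilator n (U i1)))"
  shows "(\<Sum>\<phi>\<in>annihilator n (U i1) - {vzero n}. small_weight \<phi>) =
    2 ^ n + (int (card small_blocks) - 1) * P - (\<Sum>i\<in>small_blocks. block_size i)"
proof -
  have I1: "i1 \<in> I"
    using i1 by (simp add: small_blocks_def)
  have P: "block_size i1 * P = 2 ^ n"
    using card_annihilator[OF subspace_block[OF I1]]
    by (simp add: P_def block_size_def flip: of_nat_mult)
  have "(\<Sum>\<phi>\<in>annihilator n (U i1) - {vzero n}. small_weight \<phi>) =
      (\<Sum>i\<in>small_blocks.
        block_size i * int (card (annihilator n (U i) \<inter> annihilator n (U i1) - {vzero n})))"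
  proof -
    have "(annihilator n (U i1) - {vzero n}) \<inter> annihilator n X =
        annihilator n X \<inter> annihilator n (U i1) - {vzero n}"
      for X by blast
    moreover have "finite (annihilator n (U i1) - {vzero n})"
      using annihilator_subset finite_subset_vecs by blast
    ultimately show ?thesis
      by (simp only: sum_small_weight_eq)
  qed
  also have "\<dots> = (2 ^ n - block_size i1) + (\<Sum>i\<in>small_blocks - {i1}. P - block_size i)"
    using finite_small_blocks i1 card_nonzero_annihilator[OF I1]
      card_nonzero_annihilator_Int[OF _ I1]
    by (simp add: sum.remove P_def small_blocks_def)
  also have "\<dots> = 2 ^ n + (int (card small_blocks) - 1) * P - (\<Sum>i\<in>small_blocks. block_size i)"
    using finite_small_blocks i1 int_card_Diff_singleton[OF finite_small_blocks i1]
    by (simp add: sum_subtractf sum_diff1 algebra_simps)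
  finally show ?thesis .
qed

lemma small_weight_nonneg: "0 \<le> small_weight \<phi>"
  unfolding small_weight_def by (intro sum_nonneg) simp

lemma small_weight_ge_excess:
  assumes "excess < 2 ^ k" "\<phi> \<in> vecs n" "\<phi> \<noteq> vzero n"
  shows "excess \<le> small_weight \<phi>"
proof -
  obtain j where j: "small_weight \<phi> = excess + 2 ^ k * j"
    using small_weight_cong[OF assms(2,3)] .
  have "0 \<le> j"
  proof (rule ccontr)
    assume "\<not> 0 \<le> j"
    then have "2 ^ k * j \<le> 2 ^ k * (- 1)"
      by (intro mult_left_mono) auto
    then show False
      using j small_weight_nonneg[of \<phi>] assms(1) by simp
  qed
  then show ?thesis
    using j by simp
qed

lemma sum_small_weight_ge:
  assumes "excess < 2 ^ k"
  shows "excess * (2 ^ n - 1) \<le> int (card small_blocks) * 2 ^ n - (\<Sum>i\<in>small_blocks. block_size i)"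
proof -
  have "(\<Sum>\<phi>\<in>vecs n - {vzero n}. excess) \<le> (\<Sum>\<phi>\<in>vecs n - {vzero n}. small_weight \<phi>)"
    using small_weight_ge_excess[OF assms] by (intro sum_mono) auto
  moreover have "(\<Sum>\<phi>\<in>vecs n - {vzero n}. excess) = excess * (2 ^ n - 1)"
    by (simp only: sum_constant card_nonzero_vecs mult.commute)
  ultimately show ?thesis
    unfolding sum_small_weight by linarith
qed

lemma ex_hyperplane_missing_block:
  assumes i0: "i0 \<in> small_blocks"
  obtains \<phi> where "\<phi> \<in> vecs n" "\<phi> \<noteq> vzero n"
    and "small_weight \<phi> \<le> (\<Sum>i\<in>small_blocks. block_size i) - block_size i0"
proof -
  have "i0 \<in> I"
    using i0 by (simp add: small_blocks_def)
  then obtain \<phi> where \<phi>: "\<phi> \<in> vecs n" "\<phi> \<notin> annihilator n (U i0)"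
    using annihilator_neq_vecs[OF subspace_block nontrivial_block] annihilator_subset by blast
  then have "\<phi> \<noteq> vzero n"
    by (metis vzero_in_annihilator)
  have "small_weight \<phi> =
      (\<Sum>i\<in>small_blocks - {i0}. if \<phi> \<in> annihilator n (U i) then block_size i else 0)"
    unfolding small_weight_def using \<phi> i0 finite_small_blocks by (simp add: sum.remove)
  also have "\<dots> \<le> (\<Sum>i\<in>small_blocks - {i0}. block_size i)"
    by (intro sum_mono) simp
  also have "\<dots> = (\<Sum>i\<in>small_blocks. block_size i) - block_size i0"
    using i0 finite_small_blocks by (simp add: sum_diff1)
  finally show ?thesis
    using that \<phi>(1) \<open>\<phi> \<noteq> vzero n\<close> by blast
qed

lemma card_small_blocks_gt_excess:
  assumes "excess < 2 ^ k"
  shows "excess + 1 \<le> int (card small_blocks)"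
proof (rule ccontr)
  let ?W = "\<Sum>i\<in>small_blocks. block_size i"
  assume "\<not> ?thesis"
  then have "int (card small_blocks) * 2 ^ n \<le> excess * 2 ^ n"
    by (simp add: mult_right_mono)
  moreover have "excess * 2 ^ n - excess \<le> int (card small_blocks) * 2 ^ n - ?W"
    using sum_small_weight_ge[OF assms] by (simp only: right_diff_distrib mult_1_right)
  ultimately have W: "?W \<le> excess"
    by linarith
  have "small_blocks \<noteq> {}"
  proof
    assume "small_blocks = {}"
    then have "excess * (2 ^ n - 1) \<le> 0"
      using sum_small_weight_ge[OF assms] by simp
    moreover have "0 < excess * (2 ^ n - 1)"
      using excess_pos one_less_two_pow_n by simp
    ultimately show False
      by simp
  qed
  then obtain i0 where i0: "i0 \<in> small_blocks"
    by blast
  then obtain \<phi> where "\<phi> \<in> vecs n" "\<phi> \<noteq> vzero n" "small_weight \<phi> \<le> ?W - block_size i0"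
    by (rule ex_hyperplane_missing_block)
  moreover have "0 < block_size i0"
    using i0 block_size_small by fastforce
  ultimately show False
    using W small_weight_ge_excess[OF assms] by fastforce
qed
lemma excess_ge_if_small_blocks_small:
  assumes D: "excess < 2 ^ k"
    and small_le: "\<And>i. i \<in> small_blocks \<Longrightarrow> block_size i \<le> 2 ^ ((k + r) div 2)"
  shows "2 ^ ((k + r + 1) div 2) \<le> excess"
proof (rule ccontr)
  define a :: int where "a = 2 ^ ((k + r + 1) div 2)"
  define b :: int where "b = 2 ^ ((k + r) div 2)"
  define q :: int where "q = 2 ^ k"
  define t where "t = int (card small_blocks)"
  define W where "W = (\<Sum>i\<in>small_blocks. block_size i)"
  have ab: "a * b = 2 ^ (k + r)"
    unfolding a_def b_def by (simp flip: power_add)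
  have "2 ^ 1 \<le> a"
    unfolding a_def using r_pos by (intro power_increasing) auto
  have "b \<le> q"
    unfolding b_def q_def using r_less_k by (intro power_increasing) auto
  assume "\<not> a \<le> excess"
  then have "1 + excess \<le> a"
    by (simp add: a_def)
  have W_le: "W - t \<le> t * (b - 1)"
  proof -
    have "W - t = (\<Sum>i\<in>small_blocks. block_size i - 1)"
      by (simp add: W_def t_def sum_subtractf)
    also have "\<dots> \<le> (\<Sum>i\<in>small_blocks. b - 1)"
      using small_le by (intro sum_mono) (fastforce simp: b_def)
    finally show ?thesis
      by (simp add: t_def)
  qed
  have t: "(1 + excess) * (q - b) \<le> t * (q - b)"
    using card_small_blocks_gt_excess[OF D] \<open>b \<le> q\<close> by (intro mult_right_mono) (simp_all add: t_def)
  have "2 ^ (k + r) - 1 \<le> (1 + excess) * (q - 1) - t * (q - b)"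
    using W_le sum_small_block_sizes unfolding q_def t_def W_def by (simp add: algebra_simps)
  also have "\<dots> \<le> (1 + excess) * (b - 1)"
    using t by (simp add: algebra_simps)
  also have "\<dots> \<le> a * (b - 1)"
    using \<open>1 + excess \<le> a\<close> \<open>b \<le> q\<close> by (intro mult_right_mono) (simp_all add: b_def)
  finally show False
    using ab \<open>2 ^ 1 \<le> a\<close> by (simp add: algebra_simps)
qed

lemma small_weight_ge_if_annihilates_large_block:
  assumes D: "excess < 2 ^ k" and i1: "i1 \<in> small_blocks" "excess < block_size i1"
    and \<phi>: "\<phi> \<in> annihilator n (U i1) - {vzero n}"
  shows "excess + 2 ^ k \<le> small_weight \<phi>"
proof -
  have "\<phi> \<in> vecs n" "\<phi> \<noteq> vzero n"
    using \<phi> annihilator_subset[of n "U i1"] by auto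
  then obtain j where j: "small_weight \<phi> = excess + 2 ^ k * j"
    by (rule small_weight_cong)
  have "small_weight \<phi> = block_size i1 +
      (\<Sum>i\<in>small_blocks - {i1}. if \<phi> \<in> annihilator n (U i) then block_size i else 0)"
    unfolding small_weight_def using \<phi> i1 finite_small_blocks by (simp add: sum.remove)
  also have "\<dots> \<ge> block_size i1"
    by (simp add: sum_nonneg)
  finally have "0 < 2 ^ k * j"
    using j i1(2) by simp
  then have "1 \<le> j"
    by (simp add: zero_less_mult_iff)
  then show ?thesis
    using j by simp
qed

lemma card_small_blocks_ge_if_large_block:
  assumes D: "excess < 2 ^ k" and i1: "i1 \<in> small_blocks" "excess < block_size i1"
  shows "2 * excess + 2 ^ k + 2 \<le> 2 * int (card small_blocks)"
proof -
  define P where "P = int (card (annihilator n (U i1)))"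
  define q :: int where "q = 2 ^ k"
  have I1: "i1 \<in> I"
    using i1 by (simp add: small_blocks_def)
  have zP: "block_size i1 * P = 2 ^ n"
    using card_annihilator[OF subspace_block[OF I1]] unfolding P_def block_size_def
    by (metis of_nat_mult of_nat_numeral of_nat_power)
  have "(\<Sum>\<phi>\<in>annihilator n (U i1) - {vzero n}. excess + q) \<le>
      (\<Sum>\<phi>\<in>annihilator n (U i1) - {vzero n}. small_weight \<phi>)"
    using small_weight_ge_if_annihilates_large_block[OF assms] by (intro sum_mono) (simp add: q_def)
  moreover have "int (card (annihilator n (U i1) - {vzero n})) = P - 1"
    unfolding P_def
    using finite_subset_vecs[OF annihilator_subset] vzero_in_annihilator
    by (rule int_card_Diff_singleton)
  ultimately have sum_ineq: "(P - 1) * (excess + q) \<le>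
      block_size i1 * P + (int (card small_blocks) - 1) * P - (\<Sum>i\<in>small_blocks. block_size i)"
    using sum_small_weight_annihilator[OF i1(1)] zP by (simp add: P_def)
  \<comment> \<open>the annihilator of a block of size at most \<open>q/2\<close> has at least \<open>2q\<close> elements, as \<open>q\<^sup>2 \<le> 2\<^sup>n\<close>\<close>
  have "q * q \<le> block_size i1 * P"
    using zP two_k_le_n power_increasing[of "k + k" n "2 :: int"] by (simp add: q_def power_add)
  moreover have "2 * block_size i1 * P \<le> q * P"
    using block_size_small[OF i1(1)] by (intro mult_right_mono) (simp_all add: q_def P_def)
  ultimately have "q * (2 * q) \<le> q * P"
    by (simp add: algebra_simps)
  then have "2 * q \<le> P"
    by (simp add: q_def)
  moreover have "0 \<le> (\<Sum>i\<in>small_blocks. block_size i)"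
    by (simp add: sum_nonneg)
  ultimately have "P * (excess + q + 1 - block_size i1 - int (card small_blocks)) < P * 1"
    using sum_ineq D by (simp add: algebra_simps q_def)
  moreover have "0 < P"
    using \<open>2 * q \<le> P\<close> zero_less_power[of "2 :: int" k] unfolding q_def by linarith
  ultimately have "excess + q + 1 - block_size i1 - int (card small_blocks) < 1"
    by (simp only: mult_less_cancel_left_pos)
  then show ?thesis
    using block_size_small[OF i1(1)] by (simp add: q_def)
qed

lemma excess_ge_if_small_block_large:
  assumes D: "excess < 2 ^ k" and i1: "i1 \<in> small_blocks" "2 ^ ((k + r + 1) div 2) \<le> block_size i1"
  shows "2 ^ ((k + r + 1) div 2) \<le> excess"
proof (rule ccontr)
  define a :: int where "a = 2 ^ ((k + r + 1) div 2)"
  define b :: int where "b = 2 ^ ((k + r) div 2)"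
  define q :: int where "q = 2 ^ k"
  define t where "t = int (card small_blocks)"
  define W where "W = (\<Sum>i\<in>small_blocks. block_size i)"
  assume "\<not> a \<le> excess"
  then have "1 + excess \<le> a" "excess < block_size i1"
    using i1(2) by (simp_all add: a_def)
  then have t: "2 * excess + q + 2 \<le> 2 * t"
    using card_small_blocks_ge_if_large_block[OF D i1(1)] by (simp add: q_def t_def)
  have W_le: "2 * (W - t) \<le> t * (q - 2)"
  proof -
    have "2 * (W - t) = (\<Sum>i\<in>small_blocks. 2 * block_size i - 2)"
      by (simp add: W_def t_def sum_subtractf sum_distrib_left)
    also have "\<dots> \<le> (\<Sum>i\<in>small_blocks. q - 2)"
      using block_size_small by (intro sum_mono) (simp add: q_def)
    finally show ?thesis
      by (simp add: t_def)
  qed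
  have tq: "(2 * excess + q + 2) * q \<le> 2 * t * q"
    using t by (intro mult_right_mono) (simp_all add: q_def)
  have "4 * (2 ^ (k + r) - 1) \<le> 4 * (1 + excess) * (q - 1) - 2 * t * q"
    using W_le sum_small_block_sizes unfolding q_def t_def W_def by (simp add: algebra_simps)
  also have "\<dots> \<le> (1 + excess) * (2 * q - 4) - q * q"
    using tq by (simp add: algebra_simps)
  also have "\<dots> \<le> a * (2 * q - 4) - q * q"
    using \<open>1 + excess \<le> a\<close> two_le_two_pow_k
    by (intro diff_right_mono mult_right_mono) (simp_all add: q_def)
  finally have "4 * (2 ^ (k + r) - 1) \<le> a * (2 * q - 4) - q * q" .
  moreover have "2 ^ (k + r) = a * b"
    unfolding a_def b_def by (simp flip: power_add)
  moreover have "2 \<le> a"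
    unfolding a_def using r_pos power_increasing[of 1 "(k + r + 1) div 2" "2 :: int"] by simp
  moreover have "a \<le> 2 * b"
    unfolding a_def b_def
    using power_increasing[of "(k + r + 1) div 2" "Suc ((k + r) div 2)" "2 :: int"] by simp
  ultimately show False
    using mult_sub_square_less[of a b q] by simp
qed

theorem excess_ge: "2 ^ ((k + r + 1) div 2) \<le> excess"
proof (cases "excess < 2 ^ k")
  case False
  have "(2 :: int) ^ ((k + r + 1) div 2) \<le> 2 ^ k"
    using r_less_k by (intro power_increasing) auto
  then show ?thesis
    using False by linarith
next
  case True
  show ?thesis
  proof (cases "\<forall>i\<in>small_blocks. block_size i \<le> 2 ^ ((k + r) div 2)")
    case True
    then show ?thesis
      using excess_ge_if_small_blocks_small \<open>excess < 2 ^ k\<close> by blast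
  next
    case False
    then obtain i1 where i1: "i1 \<in> small_blocks" "2 ^ ((k + r) div 2) < block_size i1"
      by auto
    then obtain h where h: "block_size i1 = 2 ^ h"
      by (auto simp: small_blocks_def elim: block_size_eq_power)
    then have "(k + r) div 2 < h"
      using i1(2) power_less_imp_less_exp[of "2 :: int"] by simp
    then have "(2 :: int) ^ ((k + r + 1) div 2) \<le> block_size i1"
      unfolding h by (intro power_increasing) auto
    then show ?thesis
      using excess_ge_if_small_block_large \<open>excess < 2 ^ k\<close> i1(1) by blast
  qed
qed

theorem card_index_ge_nondiv:
  "1 + 2 ^ nat \<lceil>(real k + real r) / 2\<rceil> + 2 ^ (k + r) * (\<Sum>i = 0..s - 2. 2 ^ (i * k))
    \<le> real (card I)"
proof -
  have "base_count + 1 + 2 ^ ((k + r + 1) div 2) \<le> int (card I)"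
    using excess_ge by (simp add: excess_def)
  then have "real_of_int (base_count + 1 + 2 ^ ((k + r + 1) div 2)) \<le> real_of_int (int (card I))"
    by (simp only: of_int_le_iff)
  then show ?thesis
    using nat_ceiling_half[of "k + r"] unfolding base_count_def by (simp add: add_ac)
qed

end

lemma NF_eq:
  assumes "is_quadratic n F"
  shows "NF n F = {b \<in> vecs n. b \<noteq> vzero n \<and> linear_space n (component F b) \<noteq> {vzero n}}"
  unfolding NF_def using is_bent_comp_iff[OF assms] by blast

lemma vs_partition_linear_spaces:
  assumes F: "maps_into n F" "is_quadratic n F" "is_APN n F"
  shows "vs_partition n (NF n F) (\<lambda>b. linear_space n (component F b))"
proof
  have NF_iff: "b \<in> NF n F \<longleftrightarrow> b \<in> vecs n \<and> b \<noteq> vzero n \<and> linear_space n (component F b) \<noteq> {vzero n}"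
    for b
    using NF_eq[OF F(2)] by blast
  show "finite (NF n F)"
    by (rule finite_subset_vecs[of _ n]) (auto simp: NF_def)
  show "is_subspace n (linear_space n (component F b))" if "b \<in> NF n F" for b
    using that F(2)
    by (intro is_subspace_linear_space second_deriv_linear_component) (auto simp: NF_iff)
  show "linear_space n (component F b) \<noteq> {vzero n}" if "b \<in> NF n F" for b
    using that by (simp add: NF_iff)
  show "linear_space n (component F b) \<inter> linear_space n (component F b') = {vzero n}"
    if "b \<in> NF n F" "b' \<in> NF n F" "b \<noteq> b'" for b b'
  proof -
    have "a = vzero n"
      if "a \<in> linear_space n (component F b)" "a \<in> linear_space n (component F b')" for a
    proof (rule ccontr)
      assume "a \<noteq> vzero n"
      have "a \<in> vecs n"
        using that linear_space_subset by blast
      then have "\<exists>!c. c \<in> vecs n \<and> c \<noteq> vzero n \<and> a \<in> linear_space n (component F c)"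
        using \<open>a \<noteq> vzero n\<close> by (rule unique_component_with_linear_vector[OF F])
      then show False
        using that \<open>b \<in> NF n F\<close> \<open>b' \<in> NF n F\<close> \<open>b \<noteq> b'\<close> unfolding NF_def by blast
    qed
    then show ?thesis
      using vzero_in_linear_space by blast
  qed
  show "\<exists>b\<in>NF n F. a \<in> linear_space n (component F b)" if a: "a \<in> vecs n" "a \<noteq> vzero n" for a
  proof -
    obtain c where "c \<in> vecs n" "c \<noteq> vzero n" "a \<in> linear_space n (component F c)"
      using unique_component_with_linear_vector[OF F a] by blast
    moreover from this(3) have "linear_space n (component F c) \<noteq> {vzero n}"
      using a(2) by blast
    ultimately show ?thesis
      using NF_iff by blast
  qed
qed

lemma card_linear_space_le:
  assumes "is_quadratic n F" and "real_of_int (linearity n F) = 2 powr ((real n + real k) / 2)"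
    and "b \<in> vecs n" "b \<noteq> vzero n"
  shows "card (linear_space n (component F b)) \<le> 2 ^ k"
proof -
  have "(linearity n F)\<^sup>2 = 2 ^ n * 2 ^ k"
    using abs_eq_two_powr_half_iff[of "linearity n F" "n + k"] assms(2) by (simp add: power_add)
  then have "2 ^ n * int (card (linear_space n (component F b))) \<le> 2 ^ n * 2 ^ k"
    using card_linear_space_le_linearity[OF assms(1,3,4)] by simp
  then have "int (card (linear_space n (component F b))) \<le> int (2 ^ k)"
    by simp
  then show ?thesis
    by (simp only: of_nat_le_iff)
qed

theorem mainTheorem8:
  fixes n k s r :: nat and F :: "bool list \<Rightarrow> bool list"
  assumes "even n"
    and "maps_into n F"
    and "is_quadratic n F"
    and "is_APN n F"
    and "real_of_int (linearity n F) = 2 powr ((real n + real k) / 2)"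
    and "real k \<le> real n / 2"
    and "n = s * k + r" and "r < k"
  shows "(k dvd n \<longrightarrow> real (card (NF n F)) \<ge> (2 ^ n - 1) / (2 ^ k - 1))
       \<and> (\<not> k dvd n \<longrightarrow> real (card (NF n F)) \<ge>
            1 + 2 ^ nat \<lceil>(real k + real r) / 2\<rceil>
              + 2 ^ (k + r) * (\<Sum>i = 0..s - 2. 2 ^ (i * k)))"
proof -
  interpret vs_partition n "NF n F" "\<lambda>b. linear_space n (component F b)"
    using assms(2-4) by (rule vs_partition_linear_spaces)
  have block_le: "card (linear_space n (component F b)) \<le> 2 ^ k" if "b \<in> NF n F" for b
    using that assms(3,5) by (intro card_linear_space_le) (auto simp: NF_def)
  show ?thesis
  proof (intro conjI impI)
    show "(2 ^ n - 1) / (2 ^ k - 1) \<le> real (card (NF n F))"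
      using card_index_ge_real block_le assms(8) by simp
  next
    assume "\<not> k dvd n"
    then have "0 < r"
      using assms(7) by (metis dvd_triv_right add_0_right gr0I)
    moreover have "2 * k \<le> n"
      using assms(6) by linarith
    ultimately interpret vs_partition_nondiv n "NF n F" "\<lambda>b. linear_space n (component F b)" k s r
      using block_le assms(7,8) by unfold_locales auto
    show "1 + 2 ^ nat \<lceil>(real k + real r) / 2\<rceil> + 2 ^ (k + r) * (\<Sum>i = 0..s - 2. 2 ^ (i * k))
        \<le> real (card (NF n F))"
      by (rule card_index_ge_nondiv)
  qed
qed

end
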